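(* Let $\alpha_2\in\mathbb{C}$ and let $(q_1,p_1,q_2,p_2)$ be a solution of the Hamiltonian system $$\frac{dq_1}{dt}=q_1^2+p_2,\quad \frac{dp_1}{dt}=-2q_1p_1+\alpha_2-\frac12,\quad \frac{dq_2}{dt}=-3p_2^2+p_1+\frac t2,\quad \frac{dp_2}{dt}=q_2$$ (Hamiltonian $H=q_1^2p_1+(\frac12-\alpha_2)q_1-p_2^3+\frac t2p_2-\frac{q_2^2}{2}+p_1p_2$). The birational symplectic transformation $$r_1:(Q_1,P_1,Q_2,P_2)=\left(\frac1{q_1},\,-\left(q_1p_1+\frac12-\alpha_2\right)q_1,\,q_2,\,p_2\right)$$ takes this system into the Hamiltonian system $$\frac{dQ_1}{dt}=-Q_1^2P_2-1,\quad \frac{dP_1}{dt}=2Q_1P_1P_2+\left(\frac12-\alpha_2\right)P_2,\quad \frac{dQ_2}{dt}=-3P_2^2+\frac t2-Q_1^2P_1-\left(\frac12-\alpha_2\right)Q_1,\quad \frac{dP_2}{dt}=Q_2,$$ with polynomial Hamiltonian $$\tilde H=-P_1-\frac{Q_2^2}{2}-P_2^3+\frac t2P_2-\left(Q_1P_1+\frac{1-2\alpha_2}{2}\right)Q_1P_2 .$$ *)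

theory Defs
  imports Complex_Main
begin

definition r1_Q1 :: "(complex \<Rightarrow> complex) \<Rightarrow> complex \<Rightarrow> complex" where
  "r1_Q1 q1 = (\<lambda>t. 1 / q1 t)"

definition r1_P1 :: "complex \<Rightarrow> (complex \<Rightarrow> complex) \<Rightarrow> (complex \<Rightarrow> complex) \<Rightarrow> complex \<Rightarrow> complex" where
  "r1_P1 \<alpha>2 q1 p1 = (\<lambda>t. - (q1 t * p1 t + 1/2 - \<alpha>2) * q1 t)"

end

theory Submission
  imports Defs
begin

text \<open>Differentiate \<open>Q\<^sub>1 = 1/q\<^sub>1\<close> and \<open>P\<^sub>1\<close> by the quotient and product rules and substitute
  the original equations; away from \<open>q\<^sub>1 = 0\<close> the results are field identities in the new
  variables. The \<open>q\<^sub>2\<close>-equation keeps its content because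
  \<open>Q\<^sub>1\<^sup>2P\<^sub>1 + (1/2 - \<alpha>\<^sub>2)Q\<^sub>1 = -p\<^sub>1\<close>.\<close>

lemma has_field_derivative_r1_Q1:
  assumes "(q1 has_field_derivative d) (at t)" and "q1 t \<noteq> 0"
  shows "(r1_Q1 q1 has_field_derivative - d / q1 t ^ 2) (at t)"
  unfolding r1_Q1_def
  by (rule derivative_eq_intros assms refl)+ (simp add: power2_eq_square)

lemma has_field_derivative_r1_P1:
  assumes "(q1 has_field_derivative d1) (at t)" and "(p1 has_field_derivative d2) (at t)"
  shows "(r1_P1 a q1 p1 has_field_derivative
           - (d1 * p1 t + q1 t * d2) * q1 t - (q1 t * p1 t + 1/2 - a) * d1) (at t)"
  unfolding r1_P1_def
  by (rule derivative_eq_intros assms refl)+ (simp add: algebra_simps)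

lemma r1_Q1_equation:
  fixes q p :: "'a :: field"
  assumes "q \<noteq> 0"
  shows "- (q\<^sup>2 + p) / q\<^sup>2 = - ((1/q)\<^sup>2 * p) - 1"
  using assms by (simp add: field_simps power2_eq_square)

lemma r1_P1_equation:
  fixes q p p2 a :: "'a :: field_char_0"
  assumes "q \<noteq> 0"
  shows "- ((q\<^sup>2 + p2) * p + q * (- 2 * q * p + a - 1/2)) * q - (q * p + 1/2 - a) * (q\<^sup>2 + p2)
       = 2 * (1/q) * (- (q * p + 1/2 - a) * q) * p2 + (1/2 - a) * p2"
  using assms by (simp add: field_simps power2_eq_square)

lemma r1_Q2_equation:
  fixes q p p2 a t :: "'a :: field_char_0"
  assumes "q \<noteq> 0"
  shows "- 3 * p2\<^sup>2 + t / 2 - (1/q)\<^sup>2 * (- (q * p + 1/2 - a) * q) - (1/2 - a) * (1/q)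
       = - 3 * p2\<^sup>2 + p + t / 2"
  using assms by (simp add: field_simps power2_eq_square)

theorem proposition7p1:
  fixes \<alpha>2 :: complex and S :: "complex set"
    and q1 p1 q2 p2 :: "complex \<Rightarrow> complex"
  assumes nz: "\<And>t. t \<in> S \<Longrightarrow> q1 t \<noteq> 0"
    and dq1: "\<And>t. t \<in> S \<Longrightarrow> (q1 has_field_derivative (q1 t ^ 2 + p2 t)) (at t)"
    and dp1: "\<And>t. t \<in> S \<Longrightarrow> (p1 has_field_derivative (- 2 * q1 t * p1 t + \<alpha>2 - 1/2)) (at t)"
    and dq2: "\<And>t. t \<in> S \<Longrightarrow> (q2 has_field_derivative (- 3 * p2 t ^ 2 + p1 t + t / 2)) (at t)"
    and dp2: "\<And>t. t \<in> S \<Longrightarrow> (p2 has_field_derivative (q2 t)) (at t)"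
  shows "\<forall>t\<in>S.
      (r1_Q1 q1 has_field_derivative
          (- ((r1_Q1 q1 t) ^ 2 * p2 t) - 1)) (at t)
    \<and> (r1_P1 \<alpha>2 q1 p1 has_field_derivative
          (2 * r1_Q1 q1 t * r1_P1 \<alpha>2 q1 p1 t * p2 t + (1/2 - \<alpha>2) * p2 t)) (at t)
    \<and> (q2 has_field_derivative
          (- 3 * p2 t ^ 2 + t / 2 - (r1_Q1 q1 t) ^ 2 * r1_P1 \<alpha>2 q1 p1 t
             - (1/2 - \<alpha>2) * r1_Q1 q1 t)) (at t)
    \<and> (p2 has_field_derivative (q2 t)) (at t)"
proof (intro ballI conjI)
  fix t assume t: "t \<in> S"
  show "(r1_Q1 q1 has_field_derivative (- ((r1_Q1 q1 t) ^ 2 * p2 t) - 1)) (at t)"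
    using has_field_derivative_r1_Q1[OF dq1[OF t] nz[OF t]]
    by (simp only: r1_Q1_equation[OF nz[OF t]] r1_Q1_def)
  show "(r1_P1 \<alpha>2 q1 p1 has_field_derivative
          (2 * r1_Q1 q1 t * r1_P1 \<alpha>2 q1 p1 t * p2 t + (1/2 - \<alpha>2) * p2 t)) (at t)"
    using has_field_derivative_r1_P1[OF dq1[OF t] dp1[OF t], of \<alpha>2]
    by (simp only: r1_P1_equation[OF nz[OF t]] r1_Q1_def r1_P1_def)
  show "(q2 has_field_derivative
          (- 3 * p2 t ^ 2 + t / 2 - (r1_Q1 q1 t) ^ 2 * r1_P1 \<alpha>2 q1 p1 t
             - (1/2 - \<alpha>2) * r1_Q1 q1 t)) (at t)"
    unfolding r1_Q1_def r1_P1_def r1_Q2_equation[OF nz[OF t]] by (rule dq2[OF t])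
  show "(p2 has_field_derivative (q2 t)) (at t)"
    by (rule dp2[OF t])
qed

end
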